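(* Let $F$ be a graph fibration and let $K,H$ be graphs with $K\in F$ and $H\in F$ such that there is an injective graph homomorphism $\iota\colon H\to K$. Then $\iota(F(H))\subset F(K)$.
   Context: Graphs are finite, undirected, without multiple edges, loops allowed, considered up to isomorphism; $N_k$ is the edgeless graph on $k$ vertices. For a set $V$, $\mathbb{Z}_2^{*V}$ is the group generated by $V$ subject to $v^2=e$; a map $\phi\colon V\to V'$ induces a homomorphism $\mathbb{Z}_2^{*V}\to\mathbb{Z}_2^{*V'}$, also denoted $\phi$. A vertex overlap of graphs $K,H$ is a subset $f\subset V(K)\times V(H)$ in which each vertex occurs at most once; $K\cup_fH$ is the quotient of $K\sqcup H$ identifying $v$ with $w$ for $(v,w)\in f$ (an edge between two vertices of the quotient iff there is one between some representatives); $f_K,f_H$ are the induced maps into $V(K\cup_fH)$. A graph fibration is a set $F$ of pairs $(K,a)$, $K$ a graph, $a\in\mathbb{Z}_2^{*V(K)}$, taken up to $(K,a)\equiv(K',\phi(a))$ for isomorphisms $\phi\colon K\to K'$, with $(N_0,e),(N_1,e)\in F$ and: (F1) each $F(K):=\{a\mid(K,a)\in F\}$ is empty or a normal subgroup of $\mathbb{Z}_2^{*V(K)}$; (F2) $\phi(F(K))=F(K)$ for all automorphisms $\phi$ of $K$; (F3) if $(K,a),(H,b)\in F$ and $f$ is a vertex overlap, then $(K\cup_fH,f_K(a)f_H(b))\in F$. We write $K\in F$ if $F(K)\ne\emptyset$. *)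

theory Defs
  imports "HOL-Algebra.Group" "HOL-Algebra.Coset"
begin

text \<open>Finite graphs with vertices drawn from nat (every finite graph is isomorphic to one
of these); loops allowed, undirected edges encoded as a symmetric relation.\<close>
type_synonym graph = "nat set \<times> (nat \<times> nat) set"

definition is_graph :: "graph \<Rightarrow> bool" where
  "is_graph K \<longleftrightarrow> finite (fst K) \<and> snd K \<subseteq> fst K \<times> fst K \<and> sym (snd K)"

text \<open>Elements of the free product of copies of Z2 indexed by V: reduced words
(no two equal adjacent letters) over V.\<close>
fun red :: "nat list \<Rightarrow> nat list" where
  "red [] = []"
| "red (x # xs) = (case red xs of [] \<Rightarrow> [x] | y # ys \<Rightarrow> (if x = y then ys else x # y # ys))"

definition reduced :: "nat list \<Rightarrow> bool" where
  "reduced w \<longleftrightarrow> (\<forall>i. Suc i < length w \<longrightarrow> w ! i \<noteq> w ! Suc i)"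

definition free_Z2 :: "nat set \<Rightarrow> nat list monoid" where
  "free_Z2 V = \<lparr> carrier = {w. set w \<subseteq> V \<and> reduced w},
                 mult = (\<lambda>x y. red (x @ y)), one = [] \<rparr>"

definition z2_hom :: "(nat \<Rightarrow> nat) \<Rightarrow> nat list \<Rightarrow> nat list" where
  "z2_hom \<phi> w = red (map \<phi> w)"

definition graph_iso :: "(nat \<Rightarrow> nat) \<Rightarrow> graph \<Rightarrow> graph \<Rightarrow> bool" where
  "graph_iso \<phi> K K' \<longleftrightarrow> bij_betw \<phi> (fst K) (fst K') \<and>
     (\<forall>x\<in>fst K. \<forall>y\<in>fst K. (x, y) \<in> snd K \<longleftrightarrow> (\<phi> x, \<phi> y) \<in> snd K')"

definition inj_graph_hom :: "(nat \<Rightarrow> nat) \<Rightarrow> graph \<Rightarrow> graph \<Rightarrow> bool" where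
  "inj_graph_hom \<iota> H K \<longleftrightarrow> inj_on \<iota> (fst H) \<and> \<iota> ` fst H \<subseteq> fst K \<and>
     (\<forall>(x, y)\<in>snd H. (\<iota> x, \<iota> y) \<in> snd K)"

definition vertex_overlap :: "(nat \<times> nat) set \<Rightarrow> graph \<Rightarrow> graph \<Rightarrow> bool" where
  "vertex_overlap f K H \<longleftrightarrow> f \<subseteq> fst K \<times> fst H \<and>
     (\<forall>(v, w)\<in>f. \<forall>(v', w')\<in>f. v = v' \<longleftrightarrow> w = w')"

text \<open>G together with fK, fH realises K \<union>_f H (up to isomorphism): the maps are
injective, jointly surjective, identify exactly the pairs in f, and the edges of G are
exactly the images of edges of K and H.\<close>
definition is_overlap_union ::
  "graph \<Rightarrow> graph \<Rightarrow> (nat \<times> nat) set \<Rightarrow> graph \<Rightarrow> (nat \<Rightarrow> nat) \<Rightarrow> (nat \<Rightarrow> nat) \<Rightarrow> bool" where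
  "is_overlap_union K H f G fK fH \<longleftrightarrow>
     inj_on fK (fst K) \<and> inj_on fH (fst H) \<and>
     fst G = fK ` fst K \<union> fH ` fst H \<and>
     (\<forall>v\<in>fst K. \<forall>w\<in>fst H. fK v = fH w \<longleftrightarrow> (v, w) \<in> f) \<and>
     snd G = (\<lambda>(x, y). (fK x, fK y)) ` snd K \<union> (\<lambda>(x, y). (fH x, fH y)) ` snd H"

text \<open>F(K) = {a. Fib K a}.\<close>
definition graph_fibration :: "(graph \<Rightarrow> nat list \<Rightarrow> bool) \<Rightarrow> bool" where
  "graph_fibration Fib \<longleftrightarrow>
     (\<forall>K a. Fib K a \<longrightarrow> is_graph K \<and> a \<in> carrier (free_Z2 (fst K))) \<and>
     (\<forall>K K' \<phi> a. Fib K a \<longrightarrow> is_graph K' \<longrightarrow> graph_iso \<phi> K K' \<longrightarrow> Fib K' (z2_hom \<phi> a)) \<and>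
     Fib ({}, {}) [] \<and> Fib ({0}, {}) [] \<and>
     (\<forall>K. is_graph K \<longrightarrow> {a. Fib K a} = {} \<or> {a. Fib K a} \<lhd> free_Z2 (fst K)) \<and>
     (\<forall>K \<phi>. is_graph K \<longrightarrow> graph_iso \<phi> K K \<longrightarrow> z2_hom \<phi> ` {a. Fib K a} = {a. Fib K a}) \<and>
     (\<forall>K H a b f G fK fH. Fib K a \<longrightarrow> Fib H b \<longrightarrow> vertex_overlap f K H \<longrightarrow> is_graph G \<longrightarrow>
        is_overlap_union K H f G fK fH \<longrightarrow>
        Fib G (z2_hom fK a \<otimes>\<^bsub>free_Z2 (fst G)\<^esub> z2_hom fH b))"

end

theory Submission
  imports Defs
begin

text \<open>Since \<iota> is an injective homomorphism, gluing H onto K along \<iota> changes nothing: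
K \<union>_f H is K itself, with f_K the identity and f_H = \<iota>. Hence (F3) puts a \<iota>(b) into F(K)
for all a \<in> F(K) and b \<in> F(H); taking a = e, which lies in the subgroup F(K), gives \<iota>(b) \<in> F(K).\<close>

lemma reduced_tl: "reduced (x # xs) \<Longrightarrow> reduced xs"
  unfolding reduced_def by (metis Suc_mono length_Cons nth_Cons_Suc)

lemma reduced_red: "reduced (red xs)"
proof (induction xs)
  case Nil
  show ?case by (simp add: reduced_def)
next
  case (Cons x xs)
  show ?case
  proof (cases "red xs")
    case Nil
    then show ?thesis by (simp add: reduced_def)
  next
    case (Cons y ys)
    have "reduced ys" using Cons.IH Cons by (metis reduced_tl)
    moreover have "x \<noteq> y \<Longrightarrow> reduced (x # y # ys)"
      using Cons.IH Cons unfolding reduced_def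
      by (metis less_Suc_eq_0_disj nth_Cons_0 nth_Cons_Suc Suc_less_eq length_Cons)
    ultimately show ?thesis using Cons by auto
  qed
qed

lemma red_reduced: "reduced w \<Longrightarrow> red w = w"
proof (induction w)
  case Nil
  show ?case by simp
next
  case (Cons x xs)
  then have red_xs: "red xs = xs" by (metis reduced_tl)
  show ?case
  proof (cases xs)
    case Nil
    then show ?thesis by simp
  next
    case (Cons y ys)
    then have "x \<noteq> y" using Cons.prems unfolding reduced_def by force
    then show ?thesis using red_xs Cons by simp
  qed
qed

lemma red_red [simp]: "red (red xs) = red xs"
  using red_reduced reduced_red by blast

lemma z2_hom_id: "a \<in> carrier (free_Z2 V) \<Longrightarrow> z2_hom id a = a"
  by (simp add: z2_hom_def free_Z2_def red_reduced)

lemma graph_fibration_Nil: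
  assumes "graph_fibration Fib" and "Fib K a"
  shows "Fib K []"
proof -
  have "is_graph K"
    using assms unfolding graph_fibration_def by blast
  have "\<forall>K. is_graph K \<longrightarrow> {a. Fib K a} = {} \<or> {a. Fib K a} \<lhd> free_Z2 (fst K)"
    using assms(1) unfolding graph_fibration_def by (elim conjE)
  then have "{a. Fib K a} \<lhd> free_Z2 (fst K)"
    using \<open>is_graph K\<close> assms(2) by blast
  then have "\<one>\<^bsub>free_Z2 (fst K)\<^esub> \<in> {a. Fib K a}"
    by (intro subgroup.one_closed normal_imp_subgroup)
  then show ?thesis by (simp add: free_Z2_def)
qed

definition overlap_along :: "(nat \<Rightarrow> nat) \<Rightarrow> graph \<Rightarrow> (nat \<times> nat) set" where
  "overlap_along \<iota> H = {(\<iota> w, w) | w. w \<in> fst H}"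

lemma inj_graph_hom_vertex_overlap:
  "inj_graph_hom \<iota> H K \<Longrightarrow> vertex_overlap (overlap_along \<iota> H) K H"
  unfolding inj_graph_hom_def vertex_overlap_def overlap_along_def by (auto dest: inj_onD)

lemma inj_graph_hom_overlap_union:
  "inj_graph_hom \<iota> H K \<Longrightarrow> is_overlap_union K H (overlap_along \<iota> H) K id \<iota>"
  unfolding inj_graph_hom_def is_overlap_union_def overlap_along_def by (auto dest: inj_onD)

lemma graph_fibration_mult_hom_image:
  assumes "graph_fibration Fib" and "Fib K a" and "Fib H b" and "inj_graph_hom \<iota> H K"
  shows "Fib K (a \<otimes>\<^bsub>free_Z2 (fst K)\<^esub> z2_hom \<iota> b)"
proof -
  have "\<forall>K a. Fib K a \<longrightarrow> is_graph K \<and> a \<in> carrier (free_Z2 (fst K))"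
    using assms(1) unfolding graph_fibration_def by (elim conjE)
  then have "is_graph K" and "a \<in> carrier (free_Z2 (fst K))"
    using assms(2) by blast+
  then have "z2_hom id a = a" by (simp add: z2_hom_id)
  moreover have "\<forall>K H a b f G fK fH. Fib K a \<longrightarrow> Fib H b \<longrightarrow> vertex_overlap f K H \<longrightarrow>
      is_graph G \<longrightarrow> is_overlap_union K H f G fK fH \<longrightarrow>
      Fib G (z2_hom fK a \<otimes>\<^bsub>free_Z2 (fst G)\<^esub> z2_hom fH b)"
    using assms(1) unfolding graph_fibration_def by (elim conjE)
  then have "Fib K (z2_hom id a \<otimes>\<^bsub>free_Z2 (fst K)\<^esub> z2_hom \<iota> b)"
    using \<open>is_graph K\<close> assms(2-4) inj_graph_hom_vertex_overlap inj_graph_hom_overlap_union by blast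
  ultimately show ?thesis by simp
qed

theorem lemma2p16:
  fixes Fib :: "graph \<Rightarrow> nat list \<Rightarrow> bool" and K H :: graph and \<iota> :: "nat \<Rightarrow> nat"
  assumes "graph_fibration Fib"
    and "is_graph K" and "is_graph H"
    and "{a. Fib K a} \<noteq> {}" and "{a. Fib H a} \<noteq> {}"
    and "inj_graph_hom \<iota> H K"
  shows "z2_hom \<iota> ` {a. Fib H a} \<subseteq> {a. Fib K a}"
proof
  fix c
  assume "c \<in> z2_hom \<iota> ` {a. Fib H a}"
  then obtain b where b: "Fib H b" and c: "c = z2_hom \<iota> b" by blast
  obtain a where "Fib K a" using assms(4) by blast
  then have "Fib K []" by (rule graph_fibration_Nil[OF assms(1)])
  then have "Fib K ([] \<otimes>\<^bsub>free_Z2 (fst K)\<^esub> z2_hom \<iota> b)"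
    using b assms(6) by (rule graph_fibration_mult_hom_image[OF assms(1)])
  then show "c \<in> {a. Fib K a}" using c by (simp add: free_Z2_def z2_hom_def)
qed

end
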